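(* For every integer $n\ge 3$: $\chi_{ei}(C_n)=1$ if $n=3$; $\chi_{ei}(C_n)=2$ if $n\ge 4$ and $n$ is even; $\chi_{ei}(C_n)=3$ if $n\ge 4$ and $n$ is odd.
   Context: All graphs are finite and simple. $C_n$ is the cycle on $n$ vertices. A path $P_4$ in $G$ is a sequence $uxyv$ of four distinct vertices with $ux,xy,yv\in E(G)$; $u,v$ are its end vertices. An $e$-injective $k$-coloring of $G$ is a function $f:V(G)\to\{1,\dots,k\}$ with $f(u)\ne f(v)$ whenever $u,v$ are the end vertices of some path $P_4$ in $G$; $\chi_{ei}(G)$ is the least such $k$. *)

theory Defs
  imports Main
begin

text \<open>A finite simple graph is given by a vertex set V and a symmetric,
irreflexive adjacency relation E (only its restriction to V matters).\<close>

definition cycle_V :: "nat \<Rightarrow> nat set" where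
  "cycle_V n = {0..<n}"

definition cycle_E :: "nat \<Rightarrow> nat \<Rightarrow> nat \<Rightarrow> bool" where
  "cycle_E n u v \<longleftrightarrow> u \<in> cycle_V n \<and> v \<in> cycle_V n \<and> u \<noteq> v \<and>
      (v = (u + 1) mod n \<or> u = (v + 1) mod n)"

definition P4_ends :: "'a set \<Rightarrow> ('a \<Rightarrow> 'a \<Rightarrow> bool) \<Rightarrow> 'a \<Rightarrow> 'a \<Rightarrow> bool" where
  "P4_ends V E u v \<longleftrightarrow> (\<exists>x y. distinct [u, x, y, v] \<and> {u, x, y, v} \<subseteq> V \<and>
      E u x \<and> E x y \<and> E y v)"

definition e_injective_coloring ::
  "'a set \<Rightarrow> ('a \<Rightarrow> 'a \<Rightarrow> bool) \<Rightarrow> nat \<Rightarrow> ('a \<Rightarrow> nat) \<Rightarrow> bool" where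
  "e_injective_coloring V E k f \<longleftrightarrow> f ` V \<subseteq> {1..k} \<and>
      (\<forall>u v. P4_ends V E u v \<longrightarrow> f u \<noteq> f v)"

definition chi_ei :: "'a set \<Rightarrow> ('a \<Rightarrow> 'a \<Rightarrow> bool) \<Rightarrow> nat" where
  "chi_ei V E = (LEAST k. \<exists>f. e_injective_coloring V E k f)"

end

theory Submission
  imports Defs
begin

(*
  C_3 contains no P_4, so one colour suffices. For n >= 4 the end vertices of the paths P_4
  in C_n are exactly the pairs {i, i + 3 mod n}, so an e-injective colouring is a proper
  colouring of the graph i ~ i + 3 mod n, and one P_4 already forces two colours. For even n
  the parity of i is such a colouring. For odd n two colours fail: walking i -> i + 3 mod n
  they must alternate, yet after n steps, an odd number, the walk is back at its start.
  Three colours suffice: parity, with a third colour on the three vertices whose successor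
  wraps around (n >= 6), and an explicit colouring of C_5.
*)

lemma P4_ends_sym:
  assumes "\<And>a b. E a b \<Longrightarrow> E b a" "P4_ends V E u v"
  shows "P4_ends V E v u"
proof -
  obtain x y where "distinct [u, x, y, v]" "{u, x, y, v} \<subseteq> V" "E u x" "E x y" "E y v"
    using assms(2) unfolding P4_ends_def by blast
  then have "distinct [v, y, x, u]" "{v, y, x, u} \<subseteq> V" "E v y" "E y x" "E x u"
    using assms(1) by auto
  then show ?thesis unfolding P4_ends_def by blast
qed

lemma not_P4_ends_if_card_less_4:
  assumes "finite V" "card V < 4"
  shows "\<not> P4_ends V E u v"
proof
  assume "P4_ends V E u v"
  then obtain x y where "distinct [u, x, y, v]" and sub: "{u, x, y, v} \<subseteq> V"
    unfolding P4_ends_def by blast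
  then have "card {u, x, y, v} = 4" by simp
  moreover have "card {u, x, y, v} \<le> card V" using card_mono[OF assms(1) sub] .
  ultimately show False using assms(2) by simp
qed

lemma e_injective_coloring_mono:
  assumes "e_injective_coloring V E k f" "k \<le> k'"
  shows "e_injective_coloring V E k' f"
  using assms unfolding e_injective_coloring_def by fastforce

lemma chi_ei_eqI:
  assumes "e_injective_coloring V E k f" "\<And>g. \<not> e_injective_coloring V E (k - 1) g"
  shows "chi_ei V E = k"
  unfolding chi_ei_def
proof (rule Least_equality)
  show "\<exists>f. e_injective_coloring V E k f" using assms(1) by blast
  show "k \<le> j" if "\<exists>g. e_injective_coloring V E j g" for j
    using that assms(2) e_injective_coloring_mono[of V E j _ "k - 1"] by force
qed

lemma not_e_injective_coloring_0:
  assumes "V \<noteq> {}"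
  shows "\<not> e_injective_coloring V E 0 f"
  using assms unfolding e_injective_coloring_def by auto

lemma not_e_injective_coloring_1:
  assumes "P4_ends V E u v"
  shows "\<not> e_injective_coloring V E 1 f"
proof
  assume col: "e_injective_coloring V E 1 f"
  have "u \<in> V" "v \<in> V" using assms unfolding P4_ends_def by auto
  then have "f u = f v" using col unfolding e_injective_coloring_def image_subset_iff by simp
  with col assms show False unfolding e_injective_coloring_def by blast
qed

lemma cycle_E_iff:
  assumes "n \<ge> 3"
  shows "cycle_E n u v \<longleftrightarrow> u < n \<and> v < n \<and>
    (v = u + 1 \<or> u = v + 1 \<or> (u = n - 1 \<and> v = 0) \<or> (v = n - 1 \<and> u = 0))"
proof -
  have "Suc a mod n = (if Suc a = n then 0 else Suc a)" if "a < n" for a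
    using that by auto
  then show ?thesis
    using assms unfolding cycle_E_def cycle_V_def
    by (cases "u < n"; cases "v < n"; auto)
qed

lemma add_3_mod_eq:
  fixes u n :: nat
  assumes "n \<ge> 3" "u < n"
  shows "(u + 3) mod n = (if u + 3 < n then u + 3 else u + 3 - n)"
  using assms by (simp add: le_mod_geq)

lemma P4_ends_cycle_add_3:
  assumes "n \<ge> 4" "u < n"
  shows "P4_ends (cycle_V n) (cycle_E n) u ((u + 3) mod n)"
proof -
  have n3: "n \<ge> 3" using assms by simp
  have path: "P4_ends (cycle_V n) (cycle_E n) u v"
    if "distinct [u, x, y, v]" "cycle_E n u x" "cycle_E n x y" "cycle_E n y v" for x y v
    unfolding P4_ends_def using that by (intro exI[of _ x] exI[of _ y]) (auto simp: cycle_E_def)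
  consider "u + 3 < n" | "u = n - 3" | "u = n - 2" | "u = n - 1" using assms by linarith
  then show ?thesis
  proof cases
    case 1
    then show ?thesis by (intro path[of "u + 1" "u + 2"]) (auto simp: cycle_E_iff[OF n3])
  next
    case 2
    then have "(u + 3) mod n = 0" using assms by simp
    with 2 show ?thesis using assms
      by (intro path[of "n - 2" "n - 1"]) (auto simp: cycle_E_iff[OF n3])
  next
    case 3
    then have "(u + 3) mod n = 1" using assms by (simp add: le_mod_geq)
    with 3 show ?thesis using assms
      by (intro path[of "n - 1" 0]) (auto simp: cycle_E_iff[OF n3])
  next
    case 4
    then have "(u + 3) mod n = 2" using assms by (simp add: le_mod_geq)
    with 4 show ?thesis using assms
      by (intro path[of 0 1]) (auto simp: cycle_E_iff[OF n3])
  qed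
qed

lemma P4_ends_cycle_iff:
  assumes "n \<ge> 4"
  shows "P4_ends (cycle_V n) (cycle_E n) u v \<longleftrightarrow>
    u < n \<and> v < n \<and> (v = (u + 3) mod n \<or> u = (v + 3) mod n)"
proof
  have n3: "n \<ge> 3" using assms by simp
  assume "P4_ends (cycle_V n) (cycle_E n) u v"
  then have "u < n \<and> v < n \<and> (v = u + 3 \<or> u = v + 3 \<or> u + 3 = v + n \<or> v + 3 = u + n)"
    using assms unfolding P4_ends_def cycle_E_iff[OF n3] by auto
  then show "u < n \<and> v < n \<and> (v = (u + 3) mod n \<or> u = (v + 3) mod n)"
    using n3 by (auto simp: add_3_mod_eq)
next
  have sym: "cycle_E n a b \<Longrightarrow> cycle_E n b a" for a b
    unfolding cycle_E_def by auto
  assume "u < n \<and> v < n \<and> (v = (u + 3) mod n \<or> u = (v + 3) mod n)"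
  then show "P4_ends (cycle_V n) (cycle_E n) u v"
    using P4_ends_cycle_add_3[OF assms, of u] P4_ends_sym[OF sym P4_ends_cycle_add_3[OF assms, of v]]
    by auto
qed

lemma e_injective_coloring_cycle_iff:
  assumes "n \<ge> 4"
  shows "e_injective_coloring (cycle_V n) (cycle_E n) k f \<longleftrightarrow>
    (\<forall>i<n. f i \<in> {1..k} \<and> f i \<noteq> f ((i + 3) mod n))"
proof -
  have "(i + 3) mod n < n" for i using assms by simp
  then show ?thesis
    unfolding e_injective_coloring_def P4_ends_cycle_iff[OF assms]
    unfolding cycle_V_def image_subset_iff
    by (auto simp del: atLeastAtMost_iff)
qed

lemma e_injective_coloring_cycle_3: "e_injective_coloring (cycle_V 3) (cycle_E 3) 1 (\<lambda>_. 1)"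
  by (auto simp: e_injective_coloring_def not_P4_ends_if_card_less_4 cycle_V_def)

lemma e_injective_coloring_cycle_even:
  assumes "n \<ge> 4" "even n"
  shows "e_injective_coloring (cycle_V n) (cycle_E n) 2 (\<lambda>i. i mod 2 + 1)"
proof -
  have "i mod 2 \<noteq> (i + 3) mod n mod 2" for i
  proof -
    have "i mod 2 \<noteq> (i + 3) mod 2" by presburger
    also have "(i + 3) mod 2 = (i + 3) mod n mod 2" using mod_mod_cancel[OF assms(2)] by simp
    finally show ?thesis .
  qed
  then show ?thesis unfolding e_injective_coloring_cycle_iff[OF assms(1)] by auto
qed

lemma e_injective_coloring_cycle_5:
  "e_injective_coloring (cycle_V 5) (cycle_E 5) 3 (\<lambda>i. [1, 2, 2, 3, 1] ! i)"
proof -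
  have "[1, 2, 2, 3, 1] ! i \<in> {1..3::nat} \<and> [1, 2, 2, 3, 1] ! i \<noteq> [1, 2, 2, 3, 1::nat] ! ((i + 3) mod 5)"
    if "i < 5" for i
  proof -
    have "i = 0 \<or> i = 1 \<or> i = 2 \<or> i = 3 \<or> i = 4" using that by linarith
    then show ?thesis by (elim disjE) simp_all
  qed
  then show ?thesis by (simp add: e_injective_coloring_cycle_iff)
qed

lemma e_injective_coloring_cycle_ge_6:
  assumes "n \<ge> 6"
  shows "e_injective_coloring (cycle_V n) (cycle_E n) 3 (\<lambda>i. if n - 3 \<le> i then 3 else i mod 2 + 1)"
    (is "e_injective_coloring _ _ _ ?f")
proof -
  have "?f i \<noteq> ?f ((i + 3) mod n)" if "i < n" for i
  proof (cases "i + 3 < n")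
    case True
    moreover have "i mod 2 \<noteq> (i + 3) mod 2" by presburger
    ultimately show ?thesis by auto
  next
    case False
    then have "(i + 3) mod n = i + 3 - n" using that assms add_3_mod_eq by simp
    moreover have "i + 3 - n < n - 3" using that assms by simp
    ultimately show ?thesis using False by auto
  qed
  moreover have "n \<ge> 4" using assms by simp
  ultimately show ?thesis by (simp add: e_injective_coloring_cycle_iff)
qed

lemma not_e_injective_coloring_cycle_odd_2:
  assumes "n \<ge> 4" "odd n"
  shows "\<not> e_injective_coloring (cycle_V n) (cycle_E n) 2 f"
proof
  assume "e_injective_coloring (cycle_V n) (cycle_E n) 2 f"
  then have col: "f i \<in> {1..2}" "f i \<noteq> f ((i + 3) mod n)" if "i < n" for i
    using that unfolding e_injective_coloring_cycle_iff[OF assms(1)] by auto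
  have swap: "f ((i + 3) mod n) = 3 - f i" if "i < n" for i
    using col[OF that] col[of "(i + 3) mod n"] assms(1) by auto
  define g where "g m = f (3 * m mod n)" for m
  have g0: "g 0 \<in> {1..2}" using col assms(1) unfolding g_def by simp
  have "g (Suc m) = 3 - g m" for m
  proof -
    have "3 * Suc m mod n = (3 * m mod n + 3) mod n" by (simp add: mod_add_right_eq add.commute)
    then show ?thesis using swap[of "3 * m mod n"] assms(1) unfolding g_def by simp
  qed
  then have "g m = (if even m then g 0 else 3 - g 0)" for m
    using g0 by (induction m) auto
  from this[of n] assms(2) g0 show False unfolding g_def by auto presburger
qed

lemma exists_e_injective_coloring_cycle_3:
  assumes "n \<ge> 4"
  shows "\<exists>f. e_injective_coloring (cycle_V n) (cycle_E n) 3 f"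
proof -
  have "even n \<or> n = 5 \<or> n \<ge> 6" using assms by presburger
  then show ?thesis
  proof (elim disjE)
    assume "even n"
    then have "e_injective_coloring (cycle_V n) (cycle_E n) 3 (\<lambda>i. i mod 2 + 1)"
      by (intro e_injective_coloring_mono[OF e_injective_coloring_cycle_even[OF assms]]) simp_all
    then show ?thesis by blast
  qed (use e_injective_coloring_cycle_5 e_injective_coloring_cycle_ge_6 in blast)+
qed

theorem proposition3p2:
  fixes n :: nat
  assumes "n \<ge> 3"
  shows "(n = 3 \<longrightarrow> chi_ei (cycle_V n) (cycle_E n) = 1) \<and>
         (n \<ge> 4 \<and> even n \<longrightarrow> chi_ei (cycle_V n) (cycle_E n) = 2) \<and>
         (n \<ge> 4 \<and> odd n \<longrightarrow> chi_ei (cycle_V n) (cycle_E n) = 3)"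
proof (intro conjI impI)
  assume "n = 3"
  have "chi_ei (cycle_V 3) (cycle_E 3) = 1"
    by (rule chi_ei_eqI[OF e_injective_coloring_cycle_3])
      (simp add: not_e_injective_coloring_0 cycle_V_def)
  with \<open>n = 3\<close> show "chi_ei (cycle_V n) (cycle_E n) = 1" by simp
next
  assume n: "n \<ge> 4 \<and> even n"
  then have "P4_ends (cycle_V n) (cycle_E n) 0 3"
    using P4_ends_cycle_add_3[of n 0] by simp
  then have "\<not> e_injective_coloring (cycle_V n) (cycle_E n) 1 g" for g
    by (rule not_e_injective_coloring_1)
  with n show "chi_ei (cycle_V n) (cycle_E n) = 2"
    by (intro chi_ei_eqI[OF e_injective_coloring_cycle_even]) simp_all
next
  assume n: "n \<ge> 4 \<and> odd n"
  then obtain f where "e_injective_coloring (cycle_V n) (cycle_E n) 3 f"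
    using exists_e_injective_coloring_cycle_3 by blast
  then show "chi_ei (cycle_V n) (cycle_E n) = 3"
    by (rule chi_ei_eqI) (use n not_e_injective_coloring_cycle_odd_2 in simp)
qed

end
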